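(* Let $m\ge2$, $K$ an algebraic number field, $a(z)\in K[z]$ monic of degree $m$, $b(z)\in K[z]$ of degree $\le m-1$ with $z^{m-1}$-coefficient $b_{m-1}$. Assume $a(z)=\prod_{i=1}^m(z-\alpha_i)$ with $\alpha_i\in K$ pairwise distinct, $s_i:=b(\alpha_i)/a'(\alpha_i)\in\mathbb{Q}\setminus\mathbb{Z}_{\le-1}$ for all $i$, and $b_{m-1}\notin\mathbb{Z}_{<-1}$. For $0\le j\le m-2$ let \[f_j(z)=\prod_{i=1}^m\Bigl(1-\frac{\alpha_i}{z}\Bigr)^{s_i}\cdot\frac{1}{z^{j+1}}F^{(m)}_D\Bigl(b_{m-1}+j+1,\,1+s_1,\ldots,1+s_m,\,b_{m-1}+j+2;\,\frac{\alpha_1}{z},\ldots,\frac{\alpha_m}{z}\Bigr).\] Then $f_0,\ldots,f_{m-2}$ are linearly independent over $K$, and $L\cdot f_j(z)\in K[z]$ for $0\le j\le m-2$, where $L=-a(z)\frac{d}{dz}+b(z)$.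
   Context: $(x)_0=1$, $(x)_k=x(x+1)\cdots(x+k-1)$; $F^{(m)}_D(\alpha,\beta_1,\ldots,\beta_m,\gamma;z_1,\ldots,z_m)=\sum_{k_1,\ldots,k_m\ge0}\frac{(\alpha)_{k_1+\cdots+k_m}\prod_i(\beta_i)_{k_i}}{(\gamma)_{k_1+\cdots+k_m}\prod_ik_i!}\prod_i z_i^{k_i}$; $(1-\alpha/z)^s=\sum_{k\ge0}\frac{(-s)_k}{k!}\alpha^kz^{-k}$. These are formal series in $(1/z)K[[1/z]]$, and $L\cdot f=-af'+bf$ with termwise differentiation. *)

theory Defs
  imports "HOL-Computational_Algebra.Computational_Algebra"
begin

definition algebraic_number_field :: "'a::field_char_0 itself \<Rightarrow> bool" where
  "algebraic_number_field _ \<longleftrightarrow>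
     (\<exists>B::'a set. finite B \<and> (\<forall>x::'a. \<exists>c::'a \<Rightarrow> rat. x = (\<Sum>v\<in>B. of_rat (c v) * v)))"

text \<open>Formal series in \<open>1/z\<close> are represented as formal Laurent series in the variable
  \<open>X = 1/z\<close>; the coefficient of \<open>X^n\<close> is the coefficient of \<open>z^(-n)\<close>.\<close>
definition poly_in_z :: "'a::field poly \<Rightarrow> 'a fls" where
  "poly_in_z p = (\<Sum>i\<le>degree p. fls_const (coeff p i) * fls_X_inv ^ i)"

text \<open>Termwise derivative with respect to \<open>z\<close>: since \<open>X = 1/z\<close>, \<open>d/dz = -X^2 d/dX\<close>,
  i.e. \<open>\<Sum> c_n z^(-n) \<mapsto> \<Sum> (-n) c_n z^(-n-1)\<close>.\<close>
definition deriv_z :: "'a::field fls \<Rightarrow> 'a fls" where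
  "deriv_z f = - (fls_X ^ 2 * fls_deriv f)"

definition L_op :: "'a::field poly \<Rightarrow> 'a poly \<Rightarrow> 'a fls \<Rightarrow> 'a fls" where
  "L_op a b f = - (poly_in_z a * deriv_z f) + poly_in_z b * f"

text \<open>\<open>(1 - \<alpha>/z)^s = \<Sum>_k (-s)_k/k! \<alpha>^k z^(-k)\<close>, as a power series in \<open>X = 1/z\<close>.\<close>
definition binom_series :: "'a::field_char_0 \<Rightarrow> 'a \<Rightarrow> 'a fps" where
  "binom_series \<alpha> s = Abs_fps (\<lambda>k. pochhammer (-s) k / fact k * \<alpha> ^ k)"

text \<open>Lauricella \<open>F_D^(m)(A, \<beta>_1..\<beta>_m, \<gamma>; \<alpha>_1/z, .., \<alpha>_m/z)\<close> as a power series in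
  \<open>X = 1/z\<close> (indices \<open>0..m-1\<close>): the coefficient of \<open>X^n\<close> collects all multi-indices
  \<open>(k_1,..,k_m)\<close> with \<open>k_1 + .. + k_m = n\<close>.\<close>
definition lauricella_FD_at :: "nat \<Rightarrow> 'a::field_char_0 \<Rightarrow> (nat \<Rightarrow> 'a) \<Rightarrow> 'a \<Rightarrow> (nat \<Rightarrow> 'a) \<Rightarrow> 'a fps" where
  "lauricella_FD_at m A \<beta> \<gamma> \<alpha> = Abs_fps (\<lambda>n.
     \<Sum>k\<in>{k. k \<in> {..<m} \<rightarrow>\<^sub>E {..n} \<and> sum k {..<m} = n}.
        pochhammer A n * (\<Prod>i<m. pochhammer (\<beta> i) (k i))
        / (pochhammer \<gamma> n * (\<Prod>i<m. fact (k i))) * (\<Prod>i<m. \<alpha> i ^ k i))"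

end

theory Submission
  imports Defs
begin

(* With X = 1/z and theta = X d/dX (fps_XD; fps_XDp c = theta + c) we have d/dz = -X^2 d/dX,
   a(z) = X^(-m) P and, by Lagrange interpolation at the alpha_i, b(z) = X^(1-m) Q, where
   P = prod_i (1 - alpha_i X), Q = sum_i s_i prod_{l ~= i} (1 - alpha_l X) and b_{m-1} = sum_i s_i.
   Hence L f = X^(1-m) (P theta + Q) f for power series f in X.
   Logarithmic differentiation of W = prod_i (1 - alpha_i X)^(s_i) gives
   (P theta + Q) (W G) = P W (theta + b_{m-1}) G.
   The coefficients of F_D(A; 1 + s; A + 1) are (A)_n / (A + 1)_n times those of
   V = prod_i (1 - alpha_i X)^(-1 - s_i), so (theta + A) F_D = A V; for A = b_{m-1} + j + 1 this
   becomes (theta + b_{m-1}) (X^(j+1) F_D) = A X^(j+1) V. Since P W V = 1, L f_j = A z^(m-2-j).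
   The f_j are independent because f_j has order exactly j + 1 in 1/z.
   The condition on b_{m-1} keeps the Pochhammer symbols in the denominators of F_D nonzero. *)

section \<open>Polynomials as series in 1/z\<close>

lemma poly_in_z_nth:
  "fls_nth (poly_in_z p) n = (if n \<le> 0 then coeff p (nat (- n)) else 0)"
proof -
  have "fls_nth (poly_in_z p) n = (\<Sum>i\<le>degree p. if n \<le> 0 \<and> i = nat (- n) then coeff p i else 0)"
    unfolding poly_in_z_def fls_nth_sum
    by (intro sum.cong refl)
       (auto simp: fls_X_inv_power_times_conv_shift mult.commute[of "fls_const _"])
  then show ?thesis
    by (cases "n \<le> 0") (auto simp: coeff_eq_0)
qed

lemma poly_in_z_0 [simp]: "poly_in_z 0 = 0"
  by (rule fls_eqI) (simp add: poly_in_z_nth)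

lemma poly_in_z_add: "poly_in_z (p + q) = poly_in_z p + poly_in_z q"
  by (rule fls_eqI) (simp add: poly_in_z_nth)

lemma poly_in_z_smult: "poly_in_z (smult c p) = fls_const c * poly_in_z p"
  by (rule fls_eqI) (simp add: poly_in_z_nth)

lemma poly_in_z_sum: "poly_in_z (\<Sum>i\<in>S. p i) = (\<Sum>i\<in>S. poly_in_z (p i))"
  by (induction S rule: infinite_finite_induct) (simp_all add: poly_in_z_add)

lemma poly_in_z_monom: "poly_in_z (monom c k) = fls_const c * fls_X_inv ^ k"
  by (rule fls_eqI)
     (auto simp: poly_in_z_nth coeff_monom fls_X_inv_power_times_conv_shift
                 mult.commute[of "fls_const _"])

lemma poly_in_z_pCons: "poly_in_z (pCons c p) = fls_const c + fls_X_inv * poly_in_z p"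
  by (rule fls_eqI)
     (auto simp: poly_in_z_nth fls_X_inv_times_conv_shift coeff_pCons nat_diff_distrib'
           split: nat.split)

lemma poly_in_z_1 [simp]: "poly_in_z 1 = 1"
  by (simp add: one_pCons poly_in_z_pCons)

lemma poly_in_z_mult: "poly_in_z (p * q) = poly_in_z p * poly_in_z q"
proof (induction p rule: pCons_induct)
  case (pCons c p)
  have "pCons c p * q = smult c q + pCons 0 (p * q)" by simp
  then show ?case
    using pCons.IH by (simp add: poly_in_z_add poly_in_z_smult poly_in_z_pCons algebra_simps)
qed simp

lemma fls_X_inv_times_X: "fls_X_inv * fls_X = (1 :: 'a::field fls)"
  by (simp add: fls_X_inv_times_conv_shift fls_X_conv_shift_1)

lemma poly_in_z_prod_linear:
  "poly_in_z (\<Prod>l\<in>S. [:- \<alpha> l, 1:])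
     = fls_X_inv ^ card S * fps_to_fls (\<Prod>l\<in>S. 1 - fps_const (\<alpha> l :: 'a::field) * fps_X)"
proof (induction S rule: infinite_finite_induct)
  case (insert l S)
  have "poly_in_z [:- \<alpha> l, 1:] = fls_X_inv * fps_to_fls (1 - fps_const (\<alpha> l) * fps_X)"
    by (simp add: poly_in_z_pCons fls_times_fps_to_fls right_diff_distrib fls_X_inv_times_X
                  mult.assoc[symmetric])
  then have "poly_in_z (\<Prod>l\<in>insert l S. [:- \<alpha> l, 1:])
      = fls_X_inv * fps_to_fls (1 - fps_const (\<alpha> l) * fps_X)
        * (fls_X_inv ^ card S * fps_to_fls (\<Prod>l\<in>S. 1 - fps_const (\<alpha> l) * fps_X))"
    by (simp only: prod.insert[OF insert.hyps] poly_in_z_mult insert.IH)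
  then show ?case
    by (simp only: prod.insert[OF insert.hyps] card_insert_disjoint[OF insert.hyps]
                   fls_times_fps_to_fls power_Suc ac_simps)
qed simp_all

lemma fls_X_inv_power_mult_fps_X_power:
  "fls_X_inv ^ (k + e) * fps_to_fls (fps_const c * fps_X ^ k) = poly_in_z (monom c e)"
proof -
  have "fls_X_inv ^ (k + e) * fps_to_fls (fps_const c * fps_X ^ k)
      = fls_const c * fls_X_inv ^ e * (fls_X_inv * fls_X) ^ k"
    by (simp add: fls_times_fps_to_fls fps_to_fls_power power_add power_mult_distrib algebra_simps)
  then show ?thesis by (simp add: fls_X_inv_times_X poly_in_z_monom)
qed

lemma fps_to_fls_sum: "fps_to_fls (\<Sum>i\<in>S. f i) = (\<Sum>i\<in>S. fps_to_fls (f i))"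
  by (induction S rule: infinite_finite_induct) simp_all

lemma fps_const_sum: "fps_const (\<Sum>i\<in>S. g i) = (\<Sum>i\<in>S. fps_const (g i :: 'a::comm_monoid_add))"
  by (induction S rule: infinite_finite_induct) (simp_all flip: fps_const_add)

lemma fps_prod_nth_0: "(\<Prod>i\<in>S. f i) $ 0 = (\<Prod>i\<in>S. f i $ 0 :: 'a::comm_ring_1)"
  by (induction S rule: infinite_finite_induct) simp_all

section \<open>Binomial series\<close>

lemma binom_series_conv_fps_binomial:
  "binom_series \<alpha> s = fps_binomial s oo (fps_const (- \<alpha>) * fps_X)"
proof (rule fps_ext)
  fix k
  have "(- \<alpha>) ^ k * (-1) ^ k = \<alpha> ^ k"
    by (simp flip: power_mult_distrib)
  then show "binom_series \<alpha> s $ k = (fps_binomial s oo (fps_const (- \<alpha>) * fps_X)) $ k"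
    by (simp add: binom_series_def fps_compose_linear gbinomial_pochhammer mult.assoc[symmetric])
qed

lemma binom_series_add: "binom_series \<alpha> (s + t) = binom_series \<alpha> s * binom_series \<alpha> t"
  by (simp add: binom_series_conv_fps_binomial fps_binomial_add_mult fps_compose_mult_distrib)

lemma binom_series_0 [simp]: "binom_series \<alpha> 0 = 1"
  by (simp add: binom_series_conv_fps_binomial)

lemma binom_series_1: "binom_series \<alpha> 1 = 1 - fps_const \<alpha> * fps_X"
  by (simp add: binom_series_conv_fps_binomial fps_binomial_1 fps_compose_add_distrib)

lemma binom_series_nth_0 [simp]: "binom_series \<alpha> s $ 0 = 1"
  by (simp add: binom_series_def)

lemma prod_binom_series_cancel:
  "(\<Prod>i\<in>S. 1 - fps_const (\<alpha> i) * fps_X) * (\<Prod>i\<in>S. binom_series (\<alpha> i) (s i))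
     * (\<Prod>i\<in>S. binom_series (\<alpha> i) (- (1 + s i))) = 1"
  unfolding binom_series_1[symmetric] prod.distrib[symmetric] binom_series_add[symmetric]
  by simp

lemma binom_series_deriv:
  "(1 - fps_const \<alpha> * fps_X) * fps_deriv (binom_series \<alpha> s)
     = fps_const (- s * \<alpha>) * binom_series \<alpha> s"
proof -
  define c where "c = fps_const (- \<alpha>) * fps_X"
  have c0: "c $ 0 = 0" and dc: "fps_deriv c = fps_const (- \<alpha>)"
    by (simp_all add: c_def)
  have lin: "(1 + fps_X) oo c = 1 - fps_const \<alpha> * fps_X"
    by (simp add: c_def fps_compose_add_distrib)
  have "(1 + fps_X) * fps_deriv (fps_binomial s) = fps_const s * fps_binomial s"
    unfolding fps_binomial_deriv by (rule fps_times_divide_eq[simplified mult.commute]) simp_all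
  then have ode: "((1 + fps_X) oo c) * (fps_deriv (fps_binomial s) oo c)
                    = fps_const s * (fps_binomial s oo c)"
    by (metis c0 fps_compose_mult_distrib fps_const_compose)
  have "(1 - fps_const \<alpha> * fps_X) * fps_deriv (binom_series \<alpha> s)
      = fps_const (- \<alpha>) * (((1 + fps_X) oo c) * (fps_deriv (fps_binomial s) oo c))"
    unfolding binom_series_conv_fps_binomial c_def[symmetric] fps_compose_deriv[OF c0] dc lin
    by (simp only: ac_simps)
  also have "\<dots> = fps_const (- s * \<alpha>) * binom_series \<alpha> s"
    unfolding ode binom_series_conv_fps_binomial c_def[symmetric] by (simp add: algebra_simps)
  finally show ?thesis .
qed

lemma sum_prod_remove_insert:
  fixes q :: "'i \<Rightarrow> 'a::comm_ring_1"
  assumes "finite S" and "a \<notin> S"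
  shows "(\<Sum>i\<in>insert a S. g i * (\<Prod>l\<in>insert a S - {i}. q l))
           = g a * (\<Prod>l\<in>S. q l) + q a * (\<Sum>i\<in>S. g i * (\<Prod>l\<in>S - {i}. q l))"
proof -
  have "(\<Prod>l\<in>insert a S - {i}. q l) = q a * (\<Prod>l\<in>S - {i}. q l)" if "i \<in> S" for i
  proof -
    have "insert a S - {i} = insert a (S - {i})" and "a \<notin> S - {i}"
      using that assms by auto
    then show ?thesis
      using assms by simp
  qed
  moreover have "insert a S - {a} = S"
    using assms by auto
  ultimately show ?thesis
    using assms by (simp add: sum_distrib_left ac_simps cong: sum.cong)
qed

lemma prod_times_fps_deriv_prod:
  fixes q B :: "'i \<Rightarrow> 'a::comm_ring_1 fps"
  assumes "finite S" and "\<And>i. i \<in> S \<Longrightarrow> q i * fps_deriv (B i) = fps_const (c i) * B i"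
  shows "(\<Prod>i\<in>S. q i) * fps_deriv (\<Prod>i\<in>S. B i)
           = (\<Prod>i\<in>S. B i) * (\<Sum>i\<in>S. fps_const (c i) * (\<Prod>l\<in>S - {i}. q l))"
  using assms
proof (induction S rule: finite_induct)
  case (insert a S)
  have "(q a * (\<Prod>i\<in>S. q i)) * fps_deriv (B a * (\<Prod>i\<in>S. B i))
      = (q a * fps_deriv (B a)) * (\<Prod>i\<in>S. q i) * (\<Prod>i\<in>S. B i)
        + q a * B a * ((\<Prod>i\<in>S. q i) * fps_deriv (\<Prod>i\<in>S. B i))"
    by (simp add: algebra_simps)
  also have "\<dots> = (B a * (\<Prod>i\<in>S. B i))
      * (fps_const (c a) * (\<Prod>i\<in>S. q i) + q a * (\<Sum>i\<in>S. fps_const (c i) * (\<Prod>l\<in>S - {i}. q l)))"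
    using insert.prems insert.IH by (simp add: algebra_simps)
  finally show ?case
    unfolding sum_prod_remove_insert[OF insert.hyps] prod.insert[OF insert.hyps] .
qed simp

lemma binom_series_prod_conjugates_operator:
  fixes \<alpha> s :: "'i \<Rightarrow> 'a::field_char_0"
  assumes "finite S"
  defines "P \<equiv> \<Prod>l\<in>S. 1 - fps_const (\<alpha> l) * fps_X"
    and "Q \<equiv> \<Sum>i\<in>S. fps_const (s i) * (\<Prod>l\<in>S - {i}. 1 - fps_const (\<alpha> l) * fps_X)"
    and "W \<equiv> \<Prod>i\<in>S. binom_series (\<alpha> i) (s i)"
  shows "P * fps_XD (W * G) + Q * (W * G) = P * W * fps_XDp (\<Sum>i\<in>S. s i) G"
proof -
  define D
    where "D = (\<Sum>i\<in>S. fps_const (- s i * \<alpha> i) * (\<Prod>l\<in>S - {i}. 1 - fps_const (\<alpha> l) * fps_X))"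
  have PW': "P * fps_deriv W = W * D"
    unfolding P_def W_def D_def using assms(1)
    by (rule prod_times_fps_deriv_prod) (rule binom_series_deriv)
  have "fps_X * D + Q
      = (\<Sum>i\<in>S. fps_const (s i)
                 * ((1 - fps_const (\<alpha> i) * fps_X) * (\<Prod>l\<in>S - {i}. 1 - fps_const (\<alpha> l) * fps_X)))"
  proof -
    have c: "fps_const (- s i * \<alpha> i) = - (fps_const (s i) * fps_const (\<alpha> i))" for i
      by simp
    show ?thesis
      unfolding D_def Q_def sum_distrib_left sum.distrib[symmetric] c
      by (intro sum.cong refl) (simp add: algebra_simps del: fps_const_neg fps_const_mult)
  qed
  also have "\<dots> = fps_const (\<Sum>i\<in>S. s i) * P"
    unfolding P_def fps_const_sum sum_distrib_right
    using assms(1) by (intro sum.cong refl) (simp add: prod.remove)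
  finally have XDQ: "fps_X * D + Q = fps_const (\<Sum>i\<in>S. s i) * P" .
  have "P * fps_XD (W * G) + Q * (W * G) = W * G * (fps_X * D + Q) + P * W * fps_XD G"
    using PW' by (simp add: fps_XD_def algebra_simps)
  also have "\<dots> = P * W * fps_XDp (\<Sum>i\<in>S. s i) G"
    unfolding XDQ fps_XDp_def by (simp add: algebra_simps)
  finally show ?thesis .
qed

section \<open>The Lauricella series\<close>

definition weak_compositions :: "nat \<Rightarrow> nat \<Rightarrow> (nat \<Rightarrow> nat) set" where
  "weak_compositions m n = {k. k \<in> {..<m} \<rightarrow>\<^sub>E {..n} \<and> sum k {..<m} = n}"

lemma finite_weak_compositions: "finite (weak_compositions m n)"
  unfolding weak_compositions_def
  by (rule finite_subset[of _ "{..<m} \<rightarrow>\<^sub>E {..n}"]) (auto intro: finite_PiE)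

lemma weak_compositions_0: "weak_compositions 0 n = (if n = 0 then {\<lambda>_. undefined} else {})"
  by (auto simp: weak_compositions_def)

lemma weak_compositions_extend:
  assumes "t \<le> n" and "k \<in> weak_compositions m t"
  shows "k(m := n - t) \<in> weak_compositions (Suc m) n"
proof -
  have k_ext: "k \<in> extensional {..<m}" and k_le: "\<forall>i<m. k i \<le> t" and sum: "sum k {..<m} = t"
    using assms(2) by (auto simp: weak_compositions_def PiE_iff)
  have "sum (k(m := n - t)) {..<m} = sum k {..<m}"
    by (rule sum.cong) auto
  then have "sum (k(m := n - t)) {..<Suc m} = n"
    using assms(1) sum by simp
  moreover have "k(m := n - t) \<in> {..<Suc m} \<rightarrow>\<^sub>E {..n}"
    using k_ext k_le assms(1) by (auto simp: PiE_iff extensional_def less_Suc_eq)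
  ultimately show ?thesis
    by (simp add: weak_compositions_def)
qed

lemma weak_compositions_restrict:
  assumes "k \<in> weak_compositions (Suc m) n"
  shows "restrict k {..<m} \<in> weak_compositions m (n - k m)"
proof -
  have "sum k {..<m} + k m = n"
    using assms by (simp add: weak_compositions_def)
  then have sum: "sum k {..<m} = n - k m"
    by simp
  have "k i \<le> n - k m" if "i < m" for i
    using that member_le_sum[of i "{..<m}" k] sum by simp
  then have "restrict k {..<m} \<in> {..<m} \<rightarrow>\<^sub>E {..n - k m}"
    by simp
  with sum show ?thesis
    by (simp add: weak_compositions_def)
qed

lemma bij_betw_weak_compositions_Suc:
  "bij_betw (\<lambda>x. (snd x)(m := n - fst x)) (SIGMA t:{..n}. weak_compositions m t)
     (weak_compositions (Suc m) n)"
proof (rule bij_betwI[where g = "\<lambda>k. (n - k m, restrict k {..<m})"])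
  show "(\<lambda>x. (snd x)(m := n - fst x))
          \<in> (SIGMA t:{..n}. weak_compositions m t) \<rightarrow> weak_compositions (Suc m) n"
    by (auto intro: weak_compositions_extend)
  show "(\<lambda>k. (n - k m, restrict k {..<m}))
          \<in> weak_compositions (Suc m) n \<rightarrow> (SIGMA t:{..n}. weak_compositions m t)"
    by (auto intro: weak_compositions_restrict)
  show "(n - ((snd x)(m := n - fst x)) m, restrict ((snd x)(m := n - fst x)) {..<m}) = x"
    if "x \<in> (SIGMA t:{..n}. weak_compositions m t)" for x
    using that by (auto simp: weak_compositions_def PiE_iff extensional_def fun_eq_iff)
  show "(snd (n - k m, restrict k {..<m}))(m := n - fst (n - k m, restrict k {..<m})) = k"
    if "k \<in> weak_compositions (Suc m) n" for k
    using that by (auto simp: weak_compositions_def PiE_iff extensional_def fun_eq_iff)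
qed

lemma fps_prod_nth_weak_compositions:
  fixes h :: "nat \<Rightarrow> 'a::comm_ring_1 fps"
  shows "(\<Prod>i<m. h i) $ n = (\<Sum>k\<in>weak_compositions m n. \<Prod>i<m. h i $ k i)"
proof (induction m arbitrary: n)
  case (Suc m)
  have "(\<Prod>i<Suc m. h i) $ n = (\<Sum>t\<le>n. \<Sum>k\<in>weak_compositions m t. (\<Prod>i<m. h i $ k i) * h m $ (n - t))"
    by (simp add: fps_mult_nth atLeast0AtMost Suc.IH sum_distrib_right)
  also have "\<dots> = (\<Sum>x\<in>(SIGMA t:{..n}. weak_compositions m t).
                       \<Prod>i<Suc m. h i $ ((snd x)(m := n - fst x)) i)"
  proof -
    have upd: "(\<Prod>i<Suc m. h i $ (k(m := y)) i) = (\<Prod>i<m. h i $ k i) * h m $ y" for k y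
    proof -
      have "(\<Prod>i<m. h i $ (k(m := y)) i) = (\<Prod>i<m. h i $ k i)"
        by (intro prod.cong) auto
      then show ?thesis by simp
    qed
    show ?thesis
      unfolding upd by (subst sum.Sigma) (simp_all add: finite_weak_compositions split_def)
  qed
  also have "\<dots> = (\<Sum>k\<in>weak_compositions (Suc m) n. \<Prod>i<Suc m. h i $ k i)"
    by (rule sum.reindex_bij_betw[OF bij_betw_weak_compositions_Suc])
  finally show ?case .
qed (simp add: weak_compositions_0)

lemma lauricella_FD_at_nth:
  "lauricella_FD_at m A \<beta> \<gamma> \<alpha> $ n
     = pochhammer A n / pochhammer \<gamma> n * (\<Prod>i<m. binom_series (\<alpha> i) (- \<beta> i)) $ n"
  unfolding fps_prod_nth_weak_compositions sum_distrib_left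
  by (simp add: lauricella_FD_at_def weak_compositions_def binom_series_def prod.distrib
                prod_dividef mult_ac)

lemma fps_XDp_lauricella_FD_at:
  assumes "\<And>n. pochhammer (A + 1) n \<noteq> 0"
  shows "fps_XDp A (lauricella_FD_at m A \<beta> (A + 1) \<alpha>)
           = fps_const A * (\<Prod>i<m. binom_series (\<alpha> i) (- \<beta> i))"
proof (rule fps_ext)
  fix n
  have "(A + of_nat n) * pochhammer A n = A * pochhammer (A + 1) n"
    by (metis pochhammer_rec pochhammer_rec')
  then have "(A + of_nat n) * (pochhammer A n / pochhammer (A + 1) n) = A"
    using assms[of n] by (simp add: field_simps)
  then show "fps_XDp A (lauricella_FD_at m A \<beta> (A + 1) \<alpha>) $ n
      = (fps_const A * (\<Prod>i<m. binom_series (\<alpha> i) (- \<beta> i))) $ n"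
    unfolding fps_XDp_nth lauricella_FD_at_nth mult.assoc[symmetric] by simp
qed

lemma fps_XDp_X_power_mult: "fps_XDp c (fps_X ^ k * f) = fps_X ^ k * fps_XDp (c + of_nat k) f"
proof (rule fps_ext)
  fix n
  show "fps_XDp c (fps_X ^ k * f) $ n = (fps_X ^ k * fps_XDp (c + of_nat k) f) $ n"
  proof (cases "k \<le> n")
    case True
    then have "c + of_nat n = c + of_nat k + of_nat (n - k)"
      by (metis le_add_diff_inverse of_nat_add add.assoc)
    then show ?thesis
      using True by (simp add: fps_X_power_mult_nth)
  qed (simp add: fps_X_power_mult_nth)
qed

section \<open>Lagrange interpolation\<close>

lemma poly_prod_linear_remove:
  fixes \<alpha> :: "'i \<Rightarrow> 'a::idom"
  assumes "finite S" and "i \<in> S" and "k \<in> S"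
  shows "poly (\<Prod>l\<in>S - {k}. [:- \<alpha> l, 1:]) (\<alpha> i) = (if k = i then \<Prod>l\<in>S - {i}. \<alpha> i - \<alpha> l else 0)"
  using assms by (auto simp: poly_prod prod_zero_iff)

lemma poly_pderiv_prod_linear:
  fixes \<alpha> :: "'i \<Rightarrow> 'a::idom"
  assumes "finite S" and "i \<in> S"
  shows "poly (pderiv (\<Prod>l\<in>S. [:- \<alpha> l, 1:])) (\<alpha> i) = (\<Prod>l\<in>S - {i}. \<alpha> i - \<alpha> l)"
  using assms
  by (simp add: pderiv_prod pderiv_pCons poly_sum poly_prod_linear_remove cong: sum.cong)

lemma lagrange_interpolation:
  fixes \<alpha> :: "'i \<Rightarrow> 'a::field" and b :: "'a poly"
  assumes S: "finite S" and inj: "inj_on \<alpha> S" and deg: "degree b < card S"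
  shows "b = (\<Sum>i\<in>S. smult (poly b (\<alpha> i) / poly (pderiv (\<Prod>l\<in>S. [:- \<alpha> l, 1:])) (\<alpha> i))
                           (\<Prod>l\<in>S - {i}. [:- \<alpha> l, 1:]))" (is "b = ?p")
proof (rule poly_eqI_degree[where A = "\<alpha> ` S"])
  have card: "card (\<alpha> ` S) = card S"
    using inj by (rule card_image)
  then show "degree b < card (\<alpha> ` S)"
    using deg by simp
  have "degree ?p \<le> card S - 1"
    by (intro degree_sum_le degree_smult_le[THEN order_trans])
       (simp_all add: degree_prod_sum_eq S card_Diff_singleton)
  then show "degree ?p < card (\<alpha> ` S)"
    using card deg by linarith
  fix x assume "x \<in> \<alpha> ` S"
  then obtain i where i: "i \<in> S" and x: "x = \<alpha> i" by auto
  have nz: "(\<Prod>l\<in>S - {i}. \<alpha> i - \<alpha> l) \<noteq> 0"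
    using S i inj by (auto simp: inj_on_def)
  have "poly ?p (\<alpha> i) = (\<Sum>k\<in>S. poly b (\<alpha> k) / poly (pderiv (\<Prod>l\<in>S. [:- \<alpha> l, 1:])) (\<alpha> k)
                                * poly (\<Prod>l\<in>S - {k}. [:- \<alpha> l, 1:]) (\<alpha> i))"
    by (simp add: poly_sum)
  also have "\<dots> = (\<Sum>k\<in>S. if k = i then poly b (\<alpha> i) else 0)"
    using S i nz
    by (intro sum.cong refl) (simp add: poly_prod_linear_remove poly_pderiv_prod_linear)
  finally show "poly b x = poly ?p x"
    using S i by (simp add: x)
qed

lemma coeff_lagrange_basis_sum:
  fixes \<alpha> :: "'i \<Rightarrow> 'a::field"
  assumes "finite S"
  shows "coeff (\<Sum>i\<in>S. smult (s i) (\<Prod>l\<in>S - {i}. [:- \<alpha> l, 1:])) (card S - 1) = (\<Sum>i\<in>S. s i)"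
proof -
  have "coeff (\<Prod>l\<in>S - {i}. [:- \<alpha> l, 1:]) (card S - 1) = 1" if "i \<in> S" for i
    using lead_coeff_prod[of "\<lambda>l. [:- \<alpha> l, 1:]" "S - {i}"] assms that
    by (simp add: degree_prod_sum_eq card_Diff_singleton)
  then show ?thesis
    by (simp add: coeff_sum)
qed

lemma poly_in_z_lagrange_basis_sum:
  fixes \<alpha> :: "'i \<Rightarrow> 'a::field"
  assumes "finite S"
  shows "poly_in_z (\<Sum>i\<in>S. smult (s i) (\<Prod>l\<in>S - {i}. [:- \<alpha> l, 1:]))
           = fls_X_inv ^ (card S - 1)
             * fps_to_fls (\<Sum>i\<in>S. fps_const (s i) * (\<Prod>l\<in>S - {i}. 1 - fps_const (\<alpha> l) * fps_X))"
  using assms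
  by (simp add: poly_in_z_sum poly_in_z_smult poly_in_z_prod_linear card_Diff_singleton
                fps_to_fls_sum sum_distrib_left fls_times_fps_to_fls ac_simps cong: sum.cong)

section \<open>The functions f_j\<close>

lemma L_op_fps_to_fls:
  assumes a: "poly_in_z a = fls_X_inv ^ Suc d * fps_to_fls P"
    and b: "poly_in_z b = fls_X_inv ^ d * fps_to_fls Q"
  shows "L_op a b (fps_to_fls H) = fls_X_inv ^ d * fps_to_fls (P * fps_XD H + Q * H)"
proof -
  have X2: "fls_X_inv ^ Suc d * fls_X ^ 2 = fls_X_inv ^ d * (fls_X_inv * fls_X) * (fls_X :: 'a fls)"
    by (simp add: power2_eq_square ac_simps)
  have "L_op a b (fps_to_fls H)
      = fls_X_inv ^ Suc d * fls_X ^ 2 * fps_to_fls (P * fps_deriv H)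
        + fls_X_inv ^ d * fps_to_fls (Q * H)"
    unfolding L_op_def deriv_z_def a b fls_deriv_fps_to_fls
    by (simp add: fls_times_fps_to_fls algebra_simps)
  also have "\<dots> = fls_X_inv ^ d * fps_to_fls (P * fps_XD H + Q * H)"
    unfolding X2 fls_X_inv_times_X by (simp add: fps_XD_def fls_times_fps_to_fls algebra_simps)
  finally show ?thesis .
qed

lemma binom_series_lauricella_operator_eq:
  fixes \<alpha> s :: "nat \<Rightarrow> 'a::field_char_0"
  assumes A: "A = (\<Sum>i<m. s i) + of_nat k"
    and poch: "\<And>n. pochhammer (A + 1) n \<noteq> 0"
  defines "P \<equiv> \<Prod>l<m. 1 - fps_const (\<alpha> l) * fps_X"
    and "Q \<equiv> \<Sum>i<m. fps_const (s i) * (\<Prod>l\<in>{..<m} - {i}. 1 - fps_const (\<alpha> l) * fps_X)"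
    and "H \<equiv> (\<Prod>i<m. binom_series (\<alpha> i) (s i)) * fps_X ^ k
               * lauricella_FD_at m A (\<lambda>i. 1 + s i) (A + 1) \<alpha>"
  shows "P * fps_XD H + Q * H = fps_const A * fps_X ^ k"
proof -
  define W where "W = (\<Prod>i<m. binom_series (\<alpha> i) (s i))"
  define V where "V = (\<Prod>i<m. binom_series (\<alpha> i) (- (1 + s i)))"
  define G where "G = fps_X ^ k * lauricella_FD_at m A (\<lambda>i. 1 + s i) (A + 1) \<alpha>"
  have "P * fps_XD (W * G) + Q * (W * G) = P * W * fps_XDp (\<Sum>i<m. s i) G"
    unfolding P_def Q_def W_def by (rule binom_series_prod_conjugates_operator) simp
  also have "fps_XDp (\<Sum>i<m. s i) G = fps_X ^ k * (fps_const A * V)"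
    unfolding G_def V_def fps_XDp_X_power_mult A[symmetric]
    by (rule arg_cong, rule fps_XDp_lauricella_FD_at[OF poch])
  also have "P * W * (fps_X ^ k * (fps_const A * V)) = fps_const A * fps_X ^ k * (P * W * V)"
    by (simp add: ac_simps)
  also have "P * W * V = 1"
    unfolding P_def W_def V_def by (rule prod_binom_series_cancel)
  finally show ?thesis
    by (simp add: H_def W_def G_def mult.assoc)
qed

lemma L_op_lauricella_solution:
  fixes \<alpha> :: "nat \<Rightarrow> 'a::field_char_0" and b :: "'a poly"
  assumes inj: "inj_on \<alpha> {..<m}" and deg: "degree b < m" and j: "j + 1 < m"
    and A: "A = coeff b (m - 1) + of_nat j + 1"
    and poch: "\<And>n. pochhammer (A + 1) n \<noteq> 0"
  defines "a \<equiv> \<Prod>i<m. [:- \<alpha> i, 1:]"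
  defines "s \<equiv> \<lambda>i. poly b (\<alpha> i) / poly (pderiv a) (\<alpha> i)"
  shows "L_op a b (fps_to_fls ((\<Prod>i<m. binom_series (\<alpha> i) (s i)) * fps_X ^ (j + 1)
                                * lauricella_FD_at m A (\<lambda>i. 1 + s i) (A + 1) \<alpha>))
           = poly_in_z (monom A (m - j - 2))"
proof -
  define P where "P = (\<Prod>l<m. 1 - fps_const (\<alpha> l) * fps_X)"
  define Q where "Q = (\<Sum>i<m. fps_const (s i) * (\<Prod>l\<in>{..<m} - {i}. 1 - fps_const (\<alpha> l) * fps_X))"
  obtain e where m: "m = Suc (j + 1 + e)"
    using j less_imp_Suc_add by blast
  have lagrange: "b = (\<Sum>i<m. smult (s i) (\<Prod>l\<in>{..<m} - {i}. [:- \<alpha> l, 1:]))"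
    using lagrange_interpolation[OF finite_lessThan inj] deg by (simp add: s_def a_def)
  have pa: "poly_in_z a = fls_X_inv ^ Suc (j + 1 + e) * fps_to_fls P"
    unfolding a_def P_def poly_in_z_prod_linear card_lessThan m[symmetric] ..
  have pb: "poly_in_z b = fls_X_inv ^ (j + 1 + e) * fps_to_fls Q"
    using poly_in_z_lagrange_basis_sum[of "{..<m}" s \<alpha>] lagrange m by (simp add: Q_def)
  have "A = (\<Sum>i<m. s i) + of_nat (j + 1)"
    using coeff_lagrange_basis_sum[of "{..<m}" s \<alpha>] lagrange A by (simp add: add.assoc)
  from binom_series_lauricella_operator_eq[OF this poch, of \<alpha>]
  have "L_op a b (fps_to_fls ((\<Prod>i<m. binom_series (\<alpha> i) (s i)) * fps_X ^ (j + 1)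
                                * lauricella_FD_at m A (\<lambda>i. 1 + s i) (A + 1) \<alpha>))
      = fls_X_inv ^ (j + 1 + e) * fps_to_fls (fps_const A * fps_X ^ (j + 1))"
    unfolding L_op_fps_to_fls[OF pa pb] P_def Q_def by simp
  also have "\<dots> = poly_in_z (monom A (m - j - 2))"
    using fls_X_inv_power_mult_fps_X_power[of "j + 1" e A] by (simp add: m)
  finally show ?thesis .
qed

lemma fls_subdegree_fps_to_fls_X_power_mult:
  fixes U :: "'a::idom fps"
  assumes "U $ 0 \<noteq> 0"
  shows "fls_subdegree (fps_to_fls (fps_X ^ k * U)) = int k"
proof -
  have "U \<noteq> 0"
    using assms by auto
  then show ?thesis
    using assms by (simp add: fls_subdegree_fls_to_fps fps_subdegree_mult_fps_X_power)
qed

lemma binom_series_lauricella_order: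
  fixes \<alpha> s \<beta> :: "nat \<Rightarrow> 'a::field_char_0" and A \<gamma> :: 'a and m k :: nat
  defines "g \<equiv> fps_to_fls ((\<Prod>i<m. binom_series (\<alpha> i) (s i)) * fps_X ^ k
                            * lauricella_FD_at m A \<beta> \<gamma> \<alpha>)"
  shows "g \<noteq> 0" and "fls_subdegree g = int k"
proof -
  define U where "U = (\<Prod>i<m. binom_series (\<alpha> i) (s i)) * lauricella_FD_at m A \<beta> \<gamma> \<alpha>"
  have U0: "U $ 0 = 1"
    by (simp add: U_def fps_prod_nth_0 lauricella_FD_at_nth)
  have g: "g = fps_to_fls (fps_X ^ k * U)"
    by (simp add: g_def U_def ac_simps)
  have "(fps_X ^ k * U) $ k = 1"
    by (simp add: fps_X_power_mult_nth U0)
  then show "g \<noteq> 0"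
    unfolding g by auto
  show "fls_subdegree g = int k"
    unfolding g using U0 by (simp add: fls_subdegree_fps_to_fls_X_power_mult)
qed

lemma fls_lincomb_eq_0_imp_coeffs_eq_0:
  fixes f :: "nat \<Rightarrow> 'a::field fls"
  assumes nz: "\<And>i. i \<le> N \<Longrightarrow> f i \<noteq> 0"
    and mono: "\<And>i j. i < j \<Longrightarrow> j \<le> N \<Longrightarrow> fls_subdegree (f i) < fls_subdegree (f j)"
    and comb: "(\<Sum>i\<le>N. fls_const (c i) * f i) = 0"
    and "j \<le> N"
  shows "c j = 0"
  using \<open>j \<le> N\<close>
proof (induction j rule: less_induct)
  case (less j)
  let ?d = "fls_subdegree (f j)"
  have "c i * fls_nth (f i) ?d = 0" if "i \<le> N" "i \<noteq> j" for i
  proof (cases "i < j")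
    case True
    with less.IH less.prems show ?thesis by simp
  next
    case False
    with that less.prems have "?d < fls_subdegree (f i)"
      by (intro mono) auto
    then show ?thesis by simp
  qed
  then have "(\<Sum>i\<in>{..N} - {j}. c i * fls_nth (f i) ?d) = 0"
    by (intro sum.neutral) auto
  moreover have "fls_nth (\<Sum>i\<le>N. fls_const (c i) * f i) ?d
      = c j * fls_nth (f j) ?d + (\<Sum>i\<in>{..N} - {j}. c i * fls_nth (f i) ?d)"
    using less.prems by (simp add: fls_nth_sum sum.remove[of "{..N}" j])
  ultimately have "0 = c j * fls_nth (f j) ?d"
    using comb by simp
  with nz[OF less.prems] show "c j = 0" by simp
qed

lemma pochhammer_nonzero_if_not_neg_int:
  fixes B :: "'a::field_char_0"
  assumes "\<not> (\<exists>n::int. n < -1 \<and> B = of_int n)"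
  shows "pochhammer (B + of_nat j + 2) n \<noteq> 0"
proof
  assume "pochhammer (B + of_nat j + 2) n = 0"
  then obtain k where "B + of_nat j + 2 = - of_nat k"
    by (auto simp: pochhammer_eq_0_iff)
  then have "B = of_int (- int k - int j - 2)"
    by (simp add: algebra_simps)
  moreover have "- int k - int j - 2 < -1"
    by simp
  ultimately show False
    using assms by blast
qed

theorem lemma4p1:
  fixes a b :: "'a::field_char_0 poly" and \<alpha> :: "nat \<Rightarrow> 'a" and m :: nat
    and f :: "nat \<Rightarrow> 'a fls"
  assumes K: "algebraic_number_field TYPE('a)"
    and m2: "m \<ge> 2"
    and a_def: "a = (\<Prod>i<m. [:- \<alpha> i, 1:])"
    and distinct: "inj_on \<alpha> {..<m}"
    and deg_b: "degree b \<le> m - 1"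
    and s_rat: "\<forall>i<m. poly b (\<alpha> i) / poly (pderiv a) (\<alpha> i) \<in> \<rat>"
    and s_not_neg: "\<forall>i<m. \<not> (\<exists>n::int. n \<le> -1 \<and> poly b (\<alpha> i) / poly (pderiv a) (\<alpha> i) = of_int n)"
    and b_not_neg: "\<not> (\<exists>n::int. n < -1 \<and> coeff b (m - 1) = of_int n)"
    and f_def: "\<forall>j. f j = fps_to_fls
          ((\<Prod>i<m. binom_series (\<alpha> i) (poly b (\<alpha> i) / poly (pderiv a) (\<alpha> i)))
           * fps_X ^ (j + 1)
           * lauricella_FD_at m (coeff b (m - 1) + of_nat j + 1)
               (\<lambda>i. 1 + poly b (\<alpha> i) / poly (pderiv a) (\<alpha> i))
               (coeff b (m - 1) + of_nat j + 2) \<alpha>)"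
  shows "(\<forall>c::nat \<Rightarrow> 'a. (\<Sum>j\<le>m - 2. fls_const (c j) * f j) = 0 \<longrightarrow> (\<forall>j\<le>m - 2. c j = 0))
         \<and> (\<forall>j\<le>m - 2. \<exists>p::'a poly. L_op a b (f j) = poly_in_z p)"
proof -
  have poch: "pochhammer (coeff b (m - 1) + of_nat j + 1 + 1) n \<noteq> 0" for j n
    using pochhammer_nonzero_if_not_neg_int[OF b_not_neg, of j n] by (simp add: add.assoc)
  have f_nz: "f j \<noteq> 0" and f_order: "fls_subdegree (f j) = int (j + 1)" for j
    unfolding f_def[rule_format] by (rule binom_series_lauricella_order)+
  show ?thesis
  proof (intro conjI allI impI)
    fix c :: "nat \<Rightarrow> 'a" and j
    assume "(\<Sum>j\<le>m - 2. fls_const (c j) * f j) = 0" and "j \<le> m - 2"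
    then show "c j = 0"
      by (intro fls_lincomb_eq_0_imp_coeffs_eq_0[where f = f and N = "m - 2"])
         (simp_all add: f_nz f_order)
  next
    fix j assume "j \<le> m - 2"
    then have "L_op a b (f j) = poly_in_z (monom (coeff b (m - 1) + of_nat j + 1) (m - j - 2))"
      using L_op_lauricella_solution[OF distinct _ _ refl poch, of j] m2 deg_b
      by (simp add: f_def a_def add.assoc)
    then show "\<exists>p. L_op a b (f j) = poly_in_z p" ..
  qed
qed

end
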